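(* Let $R:\mathbb{C}^{N_s}\to\mathbb{R}$ be the function $$R(\boldsymbol{\theta})=\sum_{k=1}^K\omega_k\Big[\log\det(\sigma_0^2\mathbf{I}+\mathbf{H}_k(\boldsymbol{\theta})\bar{\mathbf{W}}\mathbf{H}_k(\boldsymbol{\theta})^{\mathsf H})-\log\det(\sigma_0^2\mathbf{I}+\mathbf{H}_k(\boldsymbol{\theta})\bar{\mathbf{W}}_k\mathbf{H}_k(\boldsymbol{\theta})^{\mathsf H})\Big],$$ where $\mathbf{H}_k(\boldsymbol{\theta})=\mathbf{D}_k+\mathbf{U}_k\mathrm{diag}(\boldsymbol{\theta})\mathbf{G}$, $\bar{\mathbf{W}}=\sum_{j}\mathbf{W}_j\mathbf{W}_j^{\mathsf H}$, $\bar{\mathbf{W}}_k=\sum_{j\neq k}\mathbf{W}_j\mathbf{W}_j^{\mathsf H}$ for fixed matrices $\mathbf{G}\in\mathbb{C}^{N_s\times N_t}$, $\mathbf{U}_k\in\mathbb{C}^{N_r\times N_s}$, $\mathbf{D}_k\in\mathbb{C}^{N_r\times N_t}$, $\mathbf{W}_k\in\mathbb{C}^{N_t\times N_d}$, $\sigma_0^2>0$ and weights $\omega_k$. Let $\mathcal{Q}=\{\boldsymbol{\theta}\in\mathbb{C}^{N_s}:|\theta_n|=1,\ n=1,\dots,N_s\}$, let $\Pi_{\mathcal{Q}}$ denote the projection onto $\mathcal{Q}$, let $\boldsymbol{\theta}^{(\ell)}\in\mathcal{Q}$, and let $\boldsymbol{\Xi}=\mathrm{diag}\big(1/|\nabla_{\boldsymbol{\theta}}R(\boldsymbol{\theta}^{(\ell)})|\big)$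 (elementwise modulus and division). For a step size $\alpha>0$ set $\boldsymbol{\theta}(\alpha)=\Pi_{\mathcal{Q}}\big(\boldsymbol{\theta}^{(\ell)}+\alpha\boldsymbol{\Xi}\nabla_{\boldsymbol{\theta}}R(\boldsymbol{\theta}^{(\ell)})\big)$. Consider the backtracking line search that starts from an initial $\alpha=c>0$ and replaces $\alpha\leftarrow\eta\alpha$ (with fixed $0<\eta<1$) until $$R(\boldsymbol{\theta}(\alpha))\ge R(\boldsymbol{\theta}^{(\ell)})+\frac{\beta}{2N_s}\|\boldsymbol{\theta}(\alpha)-\boldsymbol{\theta}^{(\ell)}\|^2,$$ where $\beta>0$ is sufficiently small. Then this line search terminates after a finite number of steps, for any positive initial step size $c$.
   Context: The complex-valued gradient is $\nabla_{\boldsymbol{\theta}}R=\frac12\big(\frac{\partial R}{\partial\Re\{\boldsymbol{\theta}\}}+j\frac{\partial R}{\partial\Im\{\boldsymbol{\theta}\}}\big)$; $\mathrm{diag}(\mathbf{x})$ is the diagonal matrix with diagonal $\mathbf{x}$; $\|\cdot\|$ is the Euclidean norm; $\log$ is the natural logarithm. The procedure is the scaled projected gradient step for the RIS phase shifts $\boldsymbol{\theta}$ (unit-modulus constraint) in weighted sum-rate maximization for an RIS-aided downlink multiuser MIMO system with fixed precoders $\mathbf{W}_k$. *)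

theory Defs
  imports "HOL-Analysis.Analysis"
begin

definition herm :: "complex^'c^'r \<Rightarrow> complex^'r^'c" where
  "herm A = (\<chi> i j. cnj (A $ j $ i))"

definition diagm :: "complex^'n \<Rightarrow> complex^'n^'n" where
  "diagm x = (\<chi> i j. if i = j then x $ i else 0)"

definition idm :: "complex^'n^'n" where
  "idm = (\<chi> i j. if i = j then 1 else 0)"

definition chan :: "complex^'t^'r \<Rightarrow> complex^'s^'r \<Rightarrow> complex^'t^'s \<Rightarrow> complex^'s \<Rightarrow> complex^'t^'r" where
  "chan D U G \<theta> = D + U ** diagm \<theta> ** G"

text \<open>Natural log of the determinant of a matrix (applied only to Hermitian positive
  definite matrices, whose determinant is real and positive).\<close>
definition logdet :: "complex^'n^'n \<Rightarrow> real" where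
  "logdet M = ln (Re (det M))"

definition WSR :: "('k::finite \<Rightarrow> real) \<Rightarrow> real \<Rightarrow> ('k \<Rightarrow> complex^'t^'r)
   \<Rightarrow> ('k \<Rightarrow> complex^'s^'r) \<Rightarrow> complex^'t^'s \<Rightarrow> ('k \<Rightarrow> complex^'d^'t) \<Rightarrow> complex^'s \<Rightarrow> real" where
  "WSR \<omega> \<sigma>0 D U G W \<theta> =
     (\<Sum>k\<in>UNIV. \<omega> k *
        (logdet ((\<sigma>0^2) *\<^sub>R idm
                 + chan (D k) (U k) G \<theta> ** (\<Sum>j\<in>UNIV. W j ** herm (W j)) ** herm (chan (D k) (U k) G \<theta>))
       - logdet ((\<sigma>0^2) *\<^sub>R idm
                 + chan (D k) (U k) G \<theta> ** (\<Sum>j\<in>UNIV - {k}. W j ** herm (W j)) ** herm (chan (D k) (U k) G \<theta>))))"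

text \<open>Complex-valued (Wirtinger-type) gradient:
  grad f theta \$ n = 1/2 (dR/dRe theta_n + j dR/dIm theta_n).\<close>
definition cgrad :: "(complex^'n \<Rightarrow> real) \<Rightarrow> complex^'n \<Rightarrow> complex^'n" where
  "cgrad f \<theta> = (\<chi> n. (1/2) * (complex_of_real (deriv (\<lambda>t. f (\<theta> + (complex_of_real t) *s axis n 1)) 0)
                      + \<i> * complex_of_real (deriv (\<lambda>t. f (\<theta> + (\<i> * complex_of_real t) *s axis n 1)) 0)))"

definition unitmod :: "(complex^'n) set" where
  "unitmod = {\<theta>. \<forall>n. cmod (\<theta> $ n) = 1}"

text \<open>Projection onto Q: any selection of nearest points of Q.\<close>
definition is_proj_Q :: "(complex^'n \<Rightarrow> complex^'n) \<Rightarrow> bool" where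
  "is_proj_Q P \<longleftrightarrow> (\<forall>x. P x \<in> unitmod \<and> (\<forall>q\<in>unitmod. norm (x - P x) \<le> norm (x - q)))"

definition Xi :: "complex^'n \<Rightarrow> complex^'n^'n" where
  "Xi g = diagm (\<chi> n. complex_of_real (1 / cmod (g $ n)))"

end

theory Submission
  imports Defs
begin

text \<open>Each \<open>logdet\<close> in \<open>R\<close> is taken of \<open>\<sigma>\<^sup>2 I + N\<close> with \<open>N\<close> Hermitian positive
  semidefinite, whose determinant is real and positive, so \<open>R\<close> is differentiable and its
  derivative at \<open>\<theta>\<close> is \<open>v \<mapsto> \<Sum>\<^sub>n 2 Re (cnj g\<^sub>n v\<^sub>n)\<close> with \<open>g\<close> the Wirtinger gradient.
  The scaled step moves \<open>\<theta>\<^sub>n\<close> to \<open>\<theta>\<^sub>n (1 + \<alpha> w\<^sub>n)\<close> with \<open>w\<^sub>n = sgn g\<^sub>n cnj \<theta>\<^sub>n\<close>, and the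
  projection merely renormalises each coordinate. An elementary estimate on
  \<open>sgn (1 + \<alpha> w) - 1\<close> shows that the displacement \<open>d\<close> has size \<open>O(\<alpha>)\<close> and first-order gain
  at least \<open>\<kappa> \<parallel>d\<parallel>\<close> for a fixed \<open>\<kappa> > 0\<close>. For small \<open>\<alpha>\<close> this gain dominates both the
  linearisation error and the penalty \<open>\<beta> \<parallel>d\<parallel>\<^sup>2\<close>; hence in fact every \<open>\<beta> > 0\<close> is admissible,
  and the search stops as soon as \<open>c \<eta>\<^sup>m\<close> is small enough.\<close>

subsection \<open>Differentiability of matrix expressions\<close>

lemma (in bounded_linear) differentiable_compose:
  "g differentiable F \<Longrightarrow> (\<lambda>x. f (g x)) differentiable F"
  using has_derivative unfolding differentiable_def by blast

lemma bounded_linear_axis: "bounded_linear (axis i :: 'a::real_normed_vector \<Rightarrow> 'a^'n)"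
proof (rule bounded_linear_intro[where K=1])
  show "norm (axis i x) \<le> norm x * 1" for x :: 'a
  proof -
    have "(\<Sum>j\<in>UNIV. (norm (axis i x $ j))\<^sup>2) = (\<Sum>j\<in>UNIV. if j = i then (norm x)\<^sup>2 else 0)"
      by (intro sum.cong) (auto simp: axis_def)
    then show ?thesis by (simp add: norm_vec_def L2_set_def)
  qed
qed (simp_all add: axis_def vec_eq_iff)

lemma differentiable_vec_lambda:
  assumes "\<And>i. (\<lambda>x. f x i) differentiable F"
  shows "(\<lambda>x. \<chi> i. f x i) differentiable F"
proof -
  have "(\<chi> i. f x i) = (\<Sum>i\<in>UNIV. axis i (f x i))" for x
    by (simp add: vec_eq_iff axis_def sum_component if_distrib cong: if_cong)
  moreover have "(\<lambda>x. \<Sum>i\<in>UNIV. axis i (f x i)) differentiable F"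
    by (intro differentiable_sum ballI finite bounded_linear.differentiable_compose[OF bounded_linear_axis] assms)
  ultimately show ?thesis by simp
qed

lemma differentiable_vec_nth: "f differentiable F \<Longrightarrow> (\<lambda>x. f x $ i) differentiable F"
  by (rule bounded_linear.differentiable_compose[OF bounded_linear_vec_nth])

lemma differentiable_prod:
  fixes f :: "'i \<Rightarrow> 'a::real_normed_vector \<Rightarrow> 'b::real_normed_field"
  assumes "\<And>i. i \<in> I \<Longrightarrow> f i differentiable (at x)"
  shows "(\<lambda>x. \<Prod>i\<in>I. f i x) differentiable (at x)"
proof -
  obtain D where "\<And>i. i \<in> I \<Longrightarrow> (f i has_derivative D i) (at x)"
    using assms unfolding differentiable_def by metis
  then show ?thesis
    unfolding differentiable_def by (blast intro: has_derivative_prod)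
qed

lemma differentiable_matrix_mult:
  fixes f :: "'a::real_normed_vector \<Rightarrow> complex^'m^'n" and g :: "'a \<Rightarrow> complex^'p^'m"
  assumes "f differentiable (at x)" "g differentiable (at x)"
  shows "(\<lambda>x. f x ** g x) differentiable (at x)"
  unfolding matrix_matrix_mult_def
  by (intro differentiable_vec_lambda differentiable_sum ballI differentiable_mult
      differentiable_vec_nth assms finite)

lemma differentiable_herm:
  "f differentiable F \<Longrightarrow> (\<lambda>x. herm (f x)) differentiable F"
  unfolding herm_def
  by (intro differentiable_vec_lambda bounded_linear.differentiable_compose[OF bounded_linear_cnj]
      differentiable_vec_nth)

lemma differentiable_det:
  fixes f :: "'a::real_normed_vector \<Rightarrow> complex^'n^'n"
  assumes "f differentiable (at x)"
  shows "(\<lambda>x. det (f x)) differentiable (at x)"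
  unfolding det_def
  by (intro differentiable_sum ballI differentiable_mult differentiable_prod differentiable_vec_nth
      assms finite differentiable_const)

lemma differentiable_logdet:
  fixes f :: "'a::real_normed_vector \<Rightarrow> complex^'n^'n"
  assumes "f differentiable (at x)" and "Re (det (f x)) > 0"
  shows "(\<lambda>x. logdet (f x)) differentiable (at x)"
proof -
  have "(\<lambda>x. Re (det (f x))) differentiable (at x)"
    by (rule bounded_linear.differentiable_compose[OF bounded_linear_Re differentiable_det[OF assms(1)]])
  moreover have "ln differentiable (at (Re (det (f x))))"
    using DERIV_ln[OF assms(2)] by (auto simp: differentiable_def has_field_derivative_def)
  ultimately show ?thesis
    unfolding logdet_def by (rule differentiable_compose[of ln, rotated])
qed

lemma differentiable_chan: "chan D U G differentiable (at x)"
proof -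
  have "diagm differentiable (at x)"
    unfolding diagm_def
  proof (intro differentiable_vec_lambda)
    show "(\<lambda>\<theta>. if i = j then \<theta> $ i else 0) differentiable (at x)" for i j
      by (cases "i = j") (simp_all add: differentiable_vec_nth)
  qed
  then show ?thesis
    unfolding chan_def[abs_def]
    by (intro differentiable_add differentiable_const differentiable_matrix_mult)
qed

subsection \<open>Hermitian positive semidefinite matrices\<close>

definition hinner :: "complex^'n \<Rightarrow> complex^'n \<Rightarrow> complex" where
  "hinner x y = (\<Sum>i\<in>UNIV. cnj (x $ i) * y $ i)"

definition pos_semidef :: "complex^'n^'n \<Rightarrow> bool" where
  "pos_semidef N \<longleftrightarrow> herm N = N \<and> (\<forall>x. 0 \<le> Re (hinner x (N *v x)))"

lemma hinner_self: "hinner x x = of_real ((norm x)\<^sup>2)"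
proof -
  have "hinner x x = (\<Sum>i\<in>UNIV. of_real ((cmod (x $ i))\<^sup>2))"
    unfolding hinner_def by (intro sum.cong refl) (metis complex_norm_square mult.commute)
  then show ?thesis
    by (simp add: norm_vec_def L2_set_def sum_nonneg)
qed

lemma hinner_add_right: "hinner x (y + z) = hinner x y + hinner x z"
  unfolding hinner_def by (simp add: distrib_left sum.distrib)

lemma hinner_scaleR_right: "hinner x (c *\<^sub>R y) = c *\<^sub>R hinner x y"
  unfolding hinner_def by (simp add: scaleR_sum_right mult_scaleR_right)

lemma hinner_sum_right: "hinner x (\<Sum>j\<in>J. y j) = (\<Sum>j\<in>J. hinner x (y j))"
  unfolding hinner_def by (simp add: sum_component sum_distrib_left) (rule sum.swap)

lemma hinner_matrix_vector_mult_right: "hinner x (A *v y) = hinner (herm A *v x) y"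
  unfolding hinner_def matrix_vector_mult_def herm_def
  by (simp add: sum_distrib_left sum_distrib_right mult_ac) (rule sum.swap)

lemma herm_herm [simp]: "herm (herm A) = A"
  by (simp add: herm_def vec_eq_iff)

lemma herm_add: "herm (A + B) = herm A + herm B"
  by (simp add: herm_def vec_eq_iff)

lemma herm_scaleR: "herm (c *\<^sub>R A) = c *\<^sub>R herm A"
  by (simp add: herm_def vec_eq_iff)

lemma herm_sum: "herm (\<Sum>j\<in>J. A j) = (\<Sum>j\<in>J. herm (A j))"
  by (simp add: herm_def vec_eq_iff sum_component)

lemma herm_matrix_mult: "herm (A ** B) = herm B ** herm A"
  by (simp add: herm_def matrix_matrix_mult_def vec_eq_iff mult.commute)

lemma herm_idm: "herm idm = idm"
  by (simp add: herm_def idm_def vec_eq_iff)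

lemma det_herm: "det (herm A) = cnj (det A)"
proof -
  have "herm A = transpose (\<chi> i j. cnj (A $ i $ j))"
    by (simp add: herm_def transpose_def vec_eq_iff)
  then have "det (herm A) = det (\<chi> i j. cnj (A $ i $ j))"
    by simp
  also have "\<dots> = cnj (det A)"
    unfolding det_def by simp
  finally show ?thesis .
qed

lemma matrix_vector_mult_sum_left: "(\<Sum>j\<in>J. A j) *v x = (\<Sum>j\<in>J. A j *v x)"
  by (simp add: vec_eq_iff matrix_vector_mult_def sum_component sum_distrib_right) (intro allI sum.swap)

lemma pos_semidef_gram_sum: "pos_semidef (\<Sum>j\<in>J. W j ** herm (W j))"
proof -
  have "hinner x ((\<Sum>j\<in>J. W j ** herm (W j)) *v x) = (\<Sum>j\<in>J. of_real ((norm (herm (W j) *v x))\<^sup>2))" for x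
    by (simp add: matrix_vector_mult_sum_left hinner_sum_right matrix_vector_mul_assoc[symmetric]
        hinner_matrix_vector_mult_right hinner_self)
  then show ?thesis
    unfolding pos_semidef_def by (simp add: herm_sum herm_matrix_mult sum_nonneg)
qed

lemma pos_semidef_congruence:
  assumes "pos_semidef N"
  shows "pos_semidef (H ** N ** herm H)"
proof -
  have "hinner x ((H ** N ** herm H) *v x) = hinner (herm H *v x) (N *v (herm H *v x))" for x
    by (simp add: matrix_vector_mul_assoc[symmetric] matrix_mul_assoc hinner_matrix_vector_mult_right)
  with assms show ?thesis
    unfolding pos_semidef_def by (simp add: herm_matrix_mult matrix_mul_assoc)
qed

lemma scaleR_matrix_vector_mult: "(c *\<^sub>R A) *v x = c *\<^sub>R (A *v (x :: complex^'n))"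
  by (simp add: vec_eq_iff matrix_vector_mult_def scaleR_sum_right)

text \<open>Along the segment \<open>c I + s N\<close>, \<open>0 \<le> s \<le> 1\<close>, the determinant is real (the matrix is
  Hermitian) and nonzero (the matrix is positive definite); it starts at \<open>c ^ n > 0\<close>,
  so by the intermediate value theorem it stays positive.\<close>
lemma det_pos_semidef_shift_pos:
  fixes N :: "complex^'n^'n"
  assumes "c > 0" and "pos_semidef N"
  shows "Re (det (c *\<^sub>R idm + N)) > 0"
proof -
  define M where "M s = c *\<^sub>R idm + s *\<^sub>R N" for s :: real
  have N: "herm N = N" "\<And>x. 0 \<le> Re (hinner x (N *v x))"
    using assms(2) unfolding pos_semidef_def by auto
  have real: "Im (det (M s)) = 0" for s
  proof -
    have "herm (M s) = M s"
      by (simp add: M_def herm_add herm_scaleR herm_idm N(1))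
    then have "cnj (det (M s)) = det (M s)"
      by (metis det_herm)
    from arg_cong[OF this, of Im] show ?thesis
      by simp
  qed
  have nonzero: "det (M s) \<noteq> 0" if "s \<ge> 0" for s
  proof
    assume "det (M s) = 0"
    then obtain x where x: "M s *v x = 0" "x \<noteq> 0"
      by (metis invertible_det_nz invertible_left_inverse matrix_left_invertible_ker)
    have "idm *v x = x"
      by (simp add: idm_def mat_def[symmetric])
    then have "Re (hinner x (M s *v x)) = c * (norm x)\<^sup>2 + s * Re (hinner x (N *v x))"
      by (simp add: M_def matrix_vector_mult_add_rdistrib hinner_add_right hinner_scaleR_right
          scaleR_matrix_vector_mult hinner_self)
    moreover have "c * (norm x)\<^sup>2 > 0"
      using x(2) assms(1) by simp
    moreover have "s * Re (hinner x (N *v x)) \<ge> 0"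
      using that N(2) by simp
    ultimately show False
      using x(1) by (simp add: hinner_def)
  qed
  have continuous: "continuous_on {0..1} (\<lambda>s. Re (det (M s)))"
  proof (intro continuous_at_imp_continuous_on ballI)
    fix s :: real
    have "M differentiable (at s)"
      unfolding M_def[abs_def] by (intro differentiable_add differentiable_const differentiable_scaleR differentiable_ident)
    then show "isCont (\<lambda>s. Re (det (M s))) s"
      by (intro continuous_Re differentiable_imp_continuous_within differentiable_det)
  qed
  have "M 0 $ i $ j = (if i = j then complex_of_real c else 0)" for i j
    by (simp add: M_def idm_def of_real_def)
  then have "det (M 0) = (\<Prod>i\<in>(UNIV::'n set). complex_of_real c)"
    by (subst det_diagonal) auto
  then have start: "Re (det (M 0)) > 0"
    using assms(1) by (simp flip: of_real_prod)
  show ?thesis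
  proof (rule ccontr)
    assume "\<not> ?thesis"
    then have "Re (det (M 1)) \<le> 0"
      by (simp add: M_def)
    then obtain s where "0 \<le> s" "s \<le> 1" "Re (det (M s)) = 0"
      using IVT2'[of "\<lambda>s. Re (det (M s))" 1 0 0] start continuous by auto
    then show False
      using nonzero real by (metis complex_eqI zero_complex.sel)
  qed
qed

lemma differentiable_WSR:
  assumes "\<sigma>0 \<noteq> 0"
  shows "WSR \<omega> \<sigma>0 D U G W differentiable (at \<theta>)"
proof -
  have "(\<lambda>\<theta>. logdet ((\<sigma>0^2) *\<^sub>R idm + chan (D k) (U k) G \<theta> ** (\<Sum>j\<in>J. W j ** herm (W j))
                       ** herm (chan (D k) (U k) G \<theta>))) differentiable (at \<theta>)" for k J
    using assms
    by (intro differentiable_logdet det_pos_semidef_shift_pos pos_semidef_congruence pos_semidef_gram_sum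
        differentiable_add differentiable_const differentiable_matrix_mult differentiable_herm
        differentiable_chan) simp
  then show ?thesis
    unfolding WSR_def[abs_def]
    by (intro differentiable_sum finite ballI differentiable_mult differentiable_const differentiable_diff)
qed

subsection \<open>The Wirtinger gradient\<close>

lemma deriv_along_line:
  fixes f :: "'a::real_normed_vector \<Rightarrow> real"
  assumes "(f has_derivative L) (at \<theta>)"
  shows "deriv (\<lambda>t. f (\<theta> + t *\<^sub>R e)) 0 = L e"
proof -
  have "((\<lambda>t. \<theta> + t *\<^sub>R e) has_derivative (\<lambda>t. t *\<^sub>R e)) (at 0)"
    by (auto intro!: derivative_eq_intros)
  moreover have "(f has_derivative L) (at (\<theta> + 0 *\<^sub>R e))"
    using assms by simp
  ultimately have "((\<lambda>t. f (\<theta> + t *\<^sub>R e)) has_derivative (\<lambda>t. L (t *\<^sub>R e))) (at 0)"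
    by (rule has_derivative_compose)
  moreover have "L (t *\<^sub>R e) = L e * t" for t
    using linear_scale[OF has_derivative_linear[OF assms]] by simp
  ultimately have "((\<lambda>t. f (\<theta> + t *\<^sub>R e)) has_field_derivative L e) (at 0)"
    by (simp add: has_field_derivative_def)
  then show ?thesis
    by (rule DERIV_imp_deriv)
qed

lemma has_derivative_cgrad:
  fixes f :: "complex^'n \<Rightarrow> real"
  assumes "(f has_derivative L) (at \<theta>)"
  shows "L v = (\<Sum>n\<in>UNIV. 2 * Re (cnj (cgrad f \<theta> $ n) * v $ n))"
proof -
  have lin: "linear L"
    using assms by (rule has_derivative_linear)
  have "complex_of_real t *s x = t *\<^sub>R x" "(\<i> * complex_of_real t) *s x = t *\<^sub>R (\<i> *s x)"
    for t and x :: "complex^'n"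
    by (simp_all add: vec_eq_iff del: scaleR_conv_of_real) (simp_all add: scaleR_conv_of_real)
  then have grad: "cgrad f \<theta> $ n = (complex_of_real (L (axis n 1)) + \<i> * complex_of_real (L (\<i> *s axis n 1))) / 2" for n
    by (simp add: cgrad_def deriv_along_line[OF assms])
  have coordinate: "z *s axis n 1 = Re z *\<^sub>R axis n 1 + Im z *\<^sub>R (\<i> *s axis n 1)" for z and n :: 'n
    by (simp add: vec_eq_iff axis_def del: scaleR_conv_of_real) (simp add: scaleR_conv_of_real complex_eq_iff)
  have "v = (\<Sum>n\<in>UNIV. v $ n *s axis n 1)"
    by (simp add: basis_expansion)
  also have "\<dots> = (\<Sum>n\<in>UNIV. Re (v $ n) *\<^sub>R axis n 1 + Im (v $ n) *\<^sub>R (\<i> *s axis n 1))"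
    by (intro sum.cong refl coordinate)
  finally have "L v = L (\<Sum>n\<in>UNIV. Re (v $ n) *\<^sub>R axis n 1 + Im (v $ n) *\<^sub>R (\<i> *s axis n 1))"
    by (rule arg_cong)
  also have "\<dots> = (\<Sum>n\<in>UNIV. Re (v $ n) * L (axis n 1) + Im (v $ n) * L (\<i> *s axis n 1))"
    by (simp add: linear_sum[OF lin] linear_add[OF lin] linear_scale[OF lin])
  also have "\<dots> = (\<Sum>n\<in>UNIV. 2 * Re (cnj (cgrad f \<theta> $ n) * v $ n))"
    by (intro sum.cong refl) (simp add: grad field_simps)
  finally show ?thesis .
qed

subsection \<open>Projection onto the unit-modulus set\<close>

lemma norm_diff_sgn:
  fixes x :: "'a::real_normed_vector"
  assumes "x \<noteq> 0"
  shows "norm (x - sgn x) = \<bar>norm x - 1\<bar>"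
proof -
  have "x - sgn x = (norm x - 1) *\<^sub>R sgn x"
    using assms by (simp add: sgn_div_norm algebra_simps)
  then show ?thesis
    using assms by (simp add: norm_sgn)
qed

text \<open>Expanding the squares, nearness forces equality in Cauchy--Schwarz.\<close>
lemma unit_sphere_nearest_eq_sgn:
  fixes x p :: "'a::real_inner"
  assumes "x \<noteq> 0" and "norm p = 1" and "norm (x - p) \<le> norm (x - sgn x)"
  shows "p = sgn x"
proof -
  have "(norm (x - p))\<^sup>2 \<le> (norm x - 1)\<^sup>2"
    using power_mono[OF assms(3), of 2] norm_diff_sgn[OF assms(1)] by simp
  moreover have "(norm (x - p))\<^sup>2 = (norm x)\<^sup>2 - 2 * (x \<bullet> p) + 1"
    using assms(2) by (simp add: power2_norm_eq_inner inner_diff inner_commute norm_eq_1)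
  ultimately have "norm x * norm p \<le> x \<bullet> p"
    using assms(2) by (simp add: power2_diff)
  then have "x \<bullet> p = norm x * norm p"
    using norm_cauchy_schwarz[of x p] by linarith
  then have "norm x *\<^sub>R p = norm p *\<^sub>R x"
    by (simp only: norm_cauchy_schwarz_eq)
  then have "x = norm x *\<^sub>R p"
    using assms(2) by simp
  then have "sgn x = sgn (norm x) *\<^sub>R sgn p"
    by (metis sgn_scaleR)
  then show ?thesis
    using assms(1,2) by (simp add: sgn_div_norm)
qed

lemma is_proj_Q_eq_sgn:
  assumes "is_proj_Q P" and "\<And>n. x $ n \<noteq> 0"
  shows "P x = (\<chi> n. sgn (x $ n))"
proof -
  define q where "q = (\<chi> n. sgn (x $ n))"
  have "q \<in> unitmod"
    using assms(2) by (simp add: q_def unitmod_def norm_sgn)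
  then have unit: "cmod (P x $ n) = 1" and nearest: "norm (x - P x) \<le> norm (x - q)" for n
    using assms(1) unfolding is_proj_Q_def unitmod_def by auto
  have componentwise: "cmod (x $ n - q $ n) \<le> cmod (x $ n - P x $ n)" for n
    using norm_triangle_ineq3[of "x $ n" "P x $ n"] unit[of n] assms(2)[of n]
    by (simp add: q_def norm_diff_sgn)
  have "(\<Sum>n\<in>UNIV. (cmod (x $ n - P x $ n))\<^sup>2) \<le> (\<Sum>n\<in>UNIV. (cmod (x $ n - q $ n))\<^sup>2)"
    using nearest by (simp add: norm_vec_def L2_set_def sum_nonneg)
  moreover have "(\<Sum>n\<in>UNIV. (cmod (x $ n - q $ n))\<^sup>2) \<le> (\<Sum>n\<in>UNIV. (cmod (x $ n - P x $ n))\<^sup>2)"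
    by (intro sum_mono power_mono componentwise) simp
  ultimately have "(\<Sum>n\<in>UNIV. (cmod (x $ n - q $ n))\<^sup>2) = (\<Sum>n\<in>UNIV. (cmod (x $ n - P x $ n))\<^sup>2)"
    by linarith
  then have "(cmod (x $ n - q $ n))\<^sup>2 = (cmod (x $ n - P x $ n))\<^sup>2" for n
    by (rule sum_mono_inv) (auto intro: power_mono componentwise)
  then have "P x $ n = q $ n" for n
    using unit_sphere_nearest_eq_sgn[OF assms(2) unit] by (simp add: q_def)
  then show ?thesis
    by (simp add: vec_eq_iff q_def)
qed

subsection \<open>The projected scaled gradient step\<close>

text \<open>With \<open>r = cmod (1 + \<alpha> w)\<close>, the excess \<open>\<delta> = r - (1 + \<alpha> Re w)\<close> satisfies
  \<open>\<delta> (r + 1 + \<alpha> Re w) = (\<alpha> Im w)\<^sup>2\<close>, so it is quadratic in \<open>\<alpha> Im w\<close>; both estimates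
  reduce to this.\<close>
lemma sgn_one_plus_estimates:
  fixes w :: complex and \<alpha> :: real
  assumes w: "cmod w = 1" and \<alpha>: "0 < \<alpha>" "\<alpha> \<le> 1/2"
  defines "z \<equiv> sgn (1 + complex_of_real \<alpha> * w)"
  shows "\<alpha> * (Im w)\<^sup>2 / 3 \<le> Re (cnj w * (z - 1))"
    and "(cmod (z - 1))\<^sup>2 \<le> 4 * \<alpha>\<^sup>2 * (Im w)\<^sup>2"
proof -
  define a b r where "a = Re w" and "b = Im w" and "r = cmod (1 + complex_of_real \<alpha> * w)"
  have ab: "a\<^sup>2 + b\<^sup>2 = 1"
    using w cmod_power2[of w] by (simp add: a_def b_def)
  have a: "-1 \<le> a" "a \<le> 1"
    using abs_Re_le_cmod[of w] w by (auto simp: a_def)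
  have r2: "r\<^sup>2 = (1 + \<alpha> * a)\<^sup>2 + (\<alpha> * b)\<^sup>2"
    by (simp add: r_def a_def b_def cmod_power2)
  have p: "1/2 \<le> 1 + \<alpha> * a"
    using \<alpha> a mult_left_mono[OF a(1), of \<alpha>] by simp
  have r_ge: "1 + \<alpha> * a \<le> r"
    using abs_Re_le_cmod[of "1 + complex_of_real \<alpha> * w"] by (simp add: r_def a_def)
  have r_le: "r \<le> 1 + \<alpha>"
    using norm_triangle_ineq[of 1 "complex_of_real \<alpha> * w"] \<alpha> w by (simp add: r_def norm_mult)
  define \<delta> where "\<delta> = r - (1 + \<alpha> * a)"
  have \<delta>: "0 \<le> \<delta>" "\<delta> \<le> (\<alpha> * b)\<^sup>2"
  proof -
    have "\<delta> * (r + (1 + \<alpha> * a)) = (\<alpha> * b)\<^sup>2"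
      using r2 by (simp add: \<delta>_def algebra_simps power2_eq_square)
    moreover have "0 \<le> \<delta>" "1 \<le> r + (1 + \<alpha> * a)"
      using r_ge p by (auto simp: \<delta>_def)
    ultimately show "0 \<le> \<delta>" "\<delta> \<le> (\<alpha> * b)\<^sup>2"
      by (metis mult_left_mono mult.right_neutral order_trans)+
  qed
  have r_pos: "r > 0"
    using r_ge p by linarith
  have z: "Re z = (1 + \<alpha> * a) / r" "Im z = \<alpha> * b / r"
    by (simp_all add: z_def r_def a_def b_def)
  have numerator: "\<alpha> * b\<^sup>2 / 2 \<le> \<alpha> * b\<^sup>2 - a * \<delta>"
  proof -
    have "a * \<delta> \<le> \<delta>"
      using mult_right_mono[OF a(2) \<delta>(1)] by simp
    moreover have "(\<alpha> * b)\<^sup>2 \<le> \<alpha> * b\<^sup>2 / 2"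
      using mult_right_mono[OF \<alpha>(2), of "\<alpha> * b\<^sup>2"] \<alpha>(1) by (simp add: power_mult_distrib power2_eq_square mult_ac)
    ultimately show ?thesis
      using \<delta>(2) by linarith
  qed
  have "Re (cnj w * (z - 1)) = (\<alpha> * b\<^sup>2 - a * \<delta>) / r"
    using r_pos ab by (simp add: z a_def[symmetric] b_def[symmetric] \<delta>_def field_simps power2_eq_square)
  also have "\<dots> \<ge> (\<alpha> * b\<^sup>2 / 2) / (3 / 2)"
  proof (rule frac_le)
    have "0 \<le> \<alpha> * b\<^sup>2"
      using \<alpha>(1) by simp
    then show "0 \<le> \<alpha> * b\<^sup>2 - a * \<delta>"
      using numerator by linarith
  qed (use numerator r_pos r_le \<alpha> in auto)
  finally show "\<alpha> * (Im w)\<^sup>2 / 3 \<le> Re (cnj w * (z - 1))"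
    by (simp add: b_def)
  have "(cmod (z - 1))\<^sup>2 = (Re z - 1)\<^sup>2 + (Im z)\<^sup>2"
    by (simp add: cmod_power2)
  also have "\<dots> = ((1 + \<alpha> * a)\<^sup>2 + (\<alpha> * b)\<^sup>2 - 2 * r * (1 + \<alpha> * a) + r\<^sup>2) / r\<^sup>2"
    using r_pos by (simp add: z field_simps power2_eq_square)
  also have "\<dots> = 2 * \<delta> / r"
    using r_pos by (simp add: flip: r2) (simp add: \<delta>_def field_simps power2_eq_square)
  also have "\<dots> \<le> 2 * (\<alpha> * b)\<^sup>2 / (1/2)"
    using \<delta> r_pos r_ge p by (intro frac_le) auto
  finally show "(cmod (z - 1))\<^sup>2 \<le> 4 * \<alpha>\<^sup>2 * (Im w)\<^sup>2"
    by (simp add: b_def power_mult_distrib)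
qed

text \<open>Coordinates with \<open>g $ n = 0\<close> are harmless: \<open>1 / 0 = 0\<close>, matching \<open>sgn 0 = 0\<close>.\<close>
lemma Xi_mult_self: "Xi g *v g = (\<chi> n. sgn (g $ n))"
proof -
  have "(Xi g *v g) $ n = complex_of_real (1 / cmod (g $ n)) * g $ n" for n
    unfolding Xi_def diagm_def matrix_vector_mult_def
    by (simp add: if_distrib[of "\<lambda>x. x * _"] cong: if_cong)
  then show ?thesis
    by (simp add: vec_eq_iff sgn_eq field_simps)
qed

lemma unit_step_estimates:
  fixes t g :: complex and \<alpha> :: real
  assumes t: "cmod t = 1" and \<alpha>: "0 < \<alpha>" "\<alpha> \<le> 1/2"
  defines "x \<equiv> t + complex_of_real \<alpha> * sgn g" and "b \<equiv> Im (sgn g * cnj t)"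
  shows "x \<noteq> 0"
    and "cmod g * (\<alpha> * b\<^sup>2 / 3) \<le> Re (cnj g * (sgn x - t))"
    and "(cmod (sgn x - t))\<^sup>2 \<le> 4 * \<alpha>\<^sup>2 * b\<^sup>2"
proof -
  define w where "w = sgn g * cnj t"
  have "t * cnj t = 1"
    using complex_norm_square[of t] t by simp
  then have x: "x = t * (1 + complex_of_real \<alpha> * w)"
    by (simp add: x_def w_def algebra_simps)
  have w: "cmod w \<le> 1"
    using t by (simp add: w_def norm_mult norm_sgn)
  have "cmod (complex_of_real \<alpha> * w) \<le> \<alpha>"
    using mult_left_le[OF w] \<alpha> by (simp add: norm_mult)
  then have "1 - \<alpha> \<le> cmod (1 + complex_of_real \<alpha> * w)"
    using norm_diff_ineq[of 1 "complex_of_real \<alpha> * w"] by simp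
  then show "x \<noteq> 0"
    using \<alpha> t by (auto simp: x)
  have "cmod g * (\<alpha> * b\<^sup>2 / 3) \<le> Re (cnj g * (sgn x - t)) \<and> (cmod (sgn x - t))\<^sup>2 \<le> 4 * \<alpha>\<^sup>2 * b\<^sup>2"
  proof (cases "g = 0")
    case True
    then show ?thesis
      using t by (simp add: x_def sgn_div_norm)
  next
    case False
    define z where "z = sgn (1 + complex_of_real \<alpha> * w)"
    have "cmod w = 1"
      using False t by (simp add: w_def norm_mult norm_sgn)
    note estimates = sgn_one_plus_estimates[OF this \<alpha>, folded z_def]
    have b: "b = Im w"
      by (simp add: b_def w_def)
    have "sgn t = t"
      using t by (simp add: sgn_div_norm)
    then have "sgn x = t * z"
      by (simp only: x z_def Real_Vector_Spaces.sgn_mult)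
    then have step: "sgn x - t = t * (z - 1)"
      by (simp add: algebra_simps)
    have "cnj g * t = complex_of_real (cmod g) * cnj w"
      using False \<open>t * cnj t = 1\<close> by (simp add: w_def sgn_eq algebra_simps)
    then have "Re (cnj g * (sgn x - t)) = cmod g * Re (cnj w * (z - 1))"
      by (simp add: step mult.assoc[symmetric]) (simp add: algebra_simps)
    moreover have "cmod g * (\<alpha> * b\<^sup>2 / 3) \<le> cmod g * Re (cnj w * (z - 1))"
      using estimates(1) by (intro mult_left_mono) (simp_all only: b norm_ge_zero)
    ultimately have "cmod g * (\<alpha> * b\<^sup>2 / 3) \<le> Re (cnj g * (sgn x - t))"
      by simp
    moreover have "(cmod (sgn x - t))\<^sup>2 = (cmod (z - 1))\<^sup>2"
      using t by (simp add: step norm_mult)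
    ultimately show ?thesis
      using estimates(2) by (simp add: b)
  qed
  then show "cmod g * (\<alpha> * b\<^sup>2 / 3) \<le> Re (cnj g * (sgn x - t))"
    and "(cmod (sgn x - t))\<^sup>2 \<le> 4 * \<alpha>\<^sup>2 * b\<^sup>2"
    by auto
qed

lemma projected_step_estimates:
  fixes g \<theta> :: "complex^'n" and \<alpha> :: real
  assumes P: "is_proj_Q P" and \<theta>: "\<theta> \<in> unitmod" and \<alpha>: "0 < \<alpha>" "\<alpha> \<le> 1/2"
  defines "d \<equiv> P (\<theta> + complex_of_real \<alpha> *s (\<chi> n. sgn (g $ n))) - \<theta>"
    and "b \<equiv> \<lambda>n. Im (sgn (g $ n) * cnj (\<theta> $ n))"
  shows "2/3 * \<alpha> * (\<Sum>n\<in>UNIV. cmod (g $ n) * (b n)\<^sup>2) \<le> (\<Sum>n\<in>UNIV. 2 * Re (cnj (g $ n) * d $ n))"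
    and "norm d \<le> 2 * \<alpha> * sqrt (\<Sum>n\<in>UNIV. (b n)\<^sup>2)"
proof -
  have unit: "cmod (\<theta> $ n) = 1" for n
    using \<theta> by (simp add: unitmod_def)
  have estimates:
    "\<theta> $ n + complex_of_real \<alpha> * sgn (g $ n) \<noteq> 0"
    "cmod (g $ n) * (\<alpha> * (b n)\<^sup>2 / 3) \<le> Re (cnj (g $ n) * (sgn (\<theta> $ n + complex_of_real \<alpha> * sgn (g $ n)) - \<theta> $ n))"
    "(cmod (sgn (\<theta> $ n + complex_of_real \<alpha> * sgn (g $ n)) - \<theta> $ n))\<^sup>2 \<le> 4 * \<alpha>\<^sup>2 * (b n)\<^sup>2" for n
    using unit_step_estimates[OF unit[of n] \<alpha>, where g="g $ n"] by (simp_all add: b_def)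
  have "d $ n = sgn (\<theta> $ n + complex_of_real \<alpha> * sgn (g $ n)) - \<theta> $ n" for n
    using is_proj_Q_eq_sgn[OF P] estimates(1) by (simp add: d_def)
  note d = this
  have "2/3 * \<alpha> * (\<Sum>n\<in>UNIV. cmod (g $ n) * (b n)\<^sup>2) = (\<Sum>n\<in>UNIV. 2 * (cmod (g $ n) * (\<alpha> * (b n)\<^sup>2 / 3)))"
    by (simp add: sum_distrib_left algebra_simps)
  also have "\<dots> \<le> (\<Sum>n\<in>UNIV. 2 * Re (cnj (g $ n) * d $ n))"
    unfolding d using estimates(2) by (intro sum_mono) (simp only: mult_le_cancel_left_pos zero_less_numeral)
  finally show "2/3 * \<alpha> * (\<Sum>n\<in>UNIV. cmod (g $ n) * (b n)\<^sup>2) \<le> (\<Sum>n\<in>UNIV. 2 * Re (cnj (g $ n) * d $ n))" .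
  have "norm d = sqrt (\<Sum>n\<in>UNIV. (cmod (d $ n))\<^sup>2)"
    by (simp add: norm_vec_def L2_set_def)
  also have "\<dots> \<le> sqrt (\<Sum>n\<in>UNIV. 4 * \<alpha>\<^sup>2 * (b n)\<^sup>2)"
    unfolding d using estimates(3) by (intro real_sqrt_le_mono sum_mono)
  also have "\<dots> = 2 * \<alpha> * sqrt (\<Sum>n\<in>UNIV. (b n)\<^sup>2)"
    using \<alpha> by (simp add: sum_distrib_left[symmetric] real_sqrt_mult)
  finally show "norm d \<le> 2 * \<alpha> * sqrt (\<Sum>n\<in>UNIV. (b n)\<^sup>2)" .
qed

lemma sum_weighted_squares_pos:
  fixes b w :: "'i \<Rightarrow> real"
  assumes "finite I" and "(\<Sum>i\<in>I. (b i)\<^sup>2) \<noteq> 0"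
    and "\<And>i. i \<in> I \<Longrightarrow> 0 \<le> w i" and "\<And>i. i \<in> I \<Longrightarrow> b i \<noteq> 0 \<Longrightarrow> 0 < w i"
  shows "0 < (\<Sum>i\<in>I. w i * (b i)\<^sup>2)"
proof -
  have "\<exists>i\<in>I. b i \<noteq> 0"
  proof (rule ccontr)
    assume "\<not> (\<exists>i\<in>I. b i \<noteq> 0)"
    then have "(\<Sum>i\<in>I. (b i)\<^sup>2) = 0"
      by simp
    with assms(2) show False ..
  qed
  then obtain i where "i \<in> I" "b i \<noteq> 0" ..
  then have "0 < w i * (b i)\<^sup>2"
    using assms(4) by simp
  also have "\<dots> \<le> (\<Sum>i\<in>I. w i * (b i)\<^sup>2)"
    using \<open>i \<in> I\<close> assms(1,3) by (intro member_le_sum) simp_all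
  finally show ?thesis .
qed

lemma projected_step_sufficient_ascent:
  fixes g \<theta> :: "complex^'n"
  assumes "is_proj_Q P" and "\<theta> \<in> unitmod"
  obtains \<kappa> K where "\<kappa> > 0" and "K \<ge> 0"
    and "\<And>\<alpha>. 0 < \<alpha> \<Longrightarrow> \<alpha> \<le> 1/2 \<Longrightarrow>
      \<kappa> * norm (P (\<theta> + complex_of_real \<alpha> *s (\<chi> n. sgn (g $ n))) - \<theta>)
        \<le> (\<Sum>n\<in>UNIV. 2 * Re (cnj (g $ n) * (P (\<theta> + complex_of_real \<alpha> *s (\<chi> n. sgn (g $ n))) - \<theta>) $ n))"
    and "\<And>\<alpha>. 0 < \<alpha> \<Longrightarrow> \<alpha> \<le> 1/2 \<Longrightarrow> norm (P (\<theta> + complex_of_real \<alpha> *s (\<chi> n. sgn (g $ n))) - \<theta>) \<le> \<alpha> * K"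
proof -
  define d where "d \<alpha> = P (\<theta> + complex_of_real \<alpha> *s (\<chi> n. sgn (g $ n))) - \<theta>" for \<alpha>
  define b where "b n = Im (sgn (g $ n) * cnj (\<theta> $ n))" for n
  define S where "S = (\<Sum>n\<in>UNIV. cmod (g $ n) * (b n)\<^sup>2)"
  define K where "K = 2 * sqrt (\<Sum>n\<in>UNIV. (b n)\<^sup>2)"
  note estimates = projected_step_estimates[OF assms, of _ g, folded d_def b_def, folded S_def]
  have bound: "norm (d \<alpha>) \<le> \<alpha> * K" if "0 < \<alpha>" "\<alpha> \<le> 1/2" for \<alpha>
    using estimates(2)[OF that] by (simp add: K_def)
  have "K \<ge> 0" "S \<ge> 0"
    by (simp_all add: K_def S_def sum_nonneg)
  show ?thesis
  proof (cases "K = 0")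
    case True
    have "1 * norm (d \<alpha>) \<le> (\<Sum>n\<in>UNIV. 2 * Re (cnj (g $ n) * d \<alpha> $ n))"
      if \<alpha>: "0 < \<alpha>" "\<alpha> \<le> 1/2" for \<alpha>
    proof -
      have "norm (d \<alpha>) \<le> 0"
        using bound[OF \<alpha>] True by simp
      moreover have "0 \<le> 2/3 * \<alpha> * S"
        using \<alpha> \<open>S \<ge> 0\<close> by simp
      ultimately show ?thesis
        using estimates(1)[OF \<alpha>] by linarith
    qed
    then show ?thesis
      using \<open>K \<ge> 0\<close> bound by (intro that[of 1 K]) (simp_all add: d_def)
  next
    case False
    then have "S > 0"
      unfolding S_def by (intro sum_weighted_squares_pos) (auto simp: K_def b_def)
    moreover have "S / (3 * K) * norm (d \<alpha>) \<le> (\<Sum>n\<in>UNIV. 2 * Re (cnj (g $ n) * d \<alpha> $ n))"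
      if \<alpha>: "0 < \<alpha>" "\<alpha> \<le> 1/2" for \<alpha>
    proof -
      have "S / (3 * K) * norm (d \<alpha>) \<le> S / (3 * K) * (\<alpha> * K)"
        using bound[OF \<alpha>] \<open>S > 0\<close> \<open>K \<ge> 0\<close> by (intro mult_left_mono) simp_all
      also have "\<dots> = 1/3 * \<alpha> * S"
        using False by (simp add: field_simps)
      also have "\<dots> \<le> 2/3 * \<alpha> * S"
        using \<alpha> \<open>S > 0\<close> by simp
      also have "\<dots> \<le> (\<Sum>n\<in>UNIV. 2 * Re (cnj (g $ n) * d \<alpha> $ n))"
        by (rule estimates(1)[OF \<alpha>])
      finally show ?thesis .
    qed
    ultimately show ?thesis
      using False \<open>K \<ge> 0\<close> bound by (intro that[of "S / (3 * K)" K]) (simp_all add: d_def)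
  qed
qed

text \<open>For short \<open>d\<close>, a gain proportional to \<open>norm d\<close> dominates both the linearisation
  error \<open>o(norm d)\<close> and the quadratic penalty.\<close>
lemma has_derivative_sufficient_increase:
  fixes R :: "'a::real_normed_vector \<Rightarrow> real"
  assumes R: "(R has_derivative L) (at \<theta>)" and "\<kappa> > 0" and "\<beta> > 0"
  obtains e where "e > 0"
    and "\<And>d. norm d < e \<Longrightarrow> \<kappa> * norm d \<le> L d \<Longrightarrow> R \<theta> + \<beta> * (norm d)\<^sup>2 \<le> R (\<theta> + d)"
proof -
  obtain \<delta> where "\<delta> > 0"
    and linearization: "\<And>y. norm (y - \<theta>) < \<delta> \<Longrightarrow> norm (R y - R \<theta> - L (y - \<theta>)) \<le> \<kappa> / 2 * norm (y - \<theta>)"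
    using R \<open>\<kappa> > 0\<close> unfolding has_derivative_at_alt by (meson half_gt_zero)
  show ?thesis
  proof (rule that[of "min \<delta> (\<kappa> / (2 * \<beta>))"])
    show "min \<delta> (\<kappa> / (2 * \<beta>)) > 0"
      using \<open>\<delta> > 0\<close> \<open>\<kappa> > 0\<close> \<open>\<beta> > 0\<close> by simp
    fix d
    assume short: "norm d < min \<delta> (\<kappa> / (2 * \<beta>))" and gain: "\<kappa> * norm d \<le> L d"
    have "\<bar>R (\<theta> + d) - R \<theta> - L d\<bar> \<le> \<kappa> / 2 * norm d"
      using linearization[of "\<theta> + d"] short by simp
    then have "L d - \<kappa> / 2 * norm d \<le> R (\<theta> + d) - R \<theta>"
      by linarith
    moreover have "\<beta> * norm d \<le> \<kappa> / 2"
      using short \<open>\<beta> > 0\<close> by (simp add: field_simps)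
    then have "\<beta> * norm d * norm d \<le> \<kappa> / 2 * norm d"
      by (rule mult_right_mono) simp
    then have "\<beta> * (norm d)\<^sup>2 \<le> \<kappa> / 2 * norm d"
      by (simp add: power2_eq_square mult.assoc)
    ultimately show "R \<theta> + \<beta> * (norm d)\<^sup>2 \<le> R (\<theta> + d)"
      using gain by linarith
  qed
qed

lemma scaled_projected_gradient_backtracking_terminates:
  fixes R :: "complex^'s \<Rightarrow> real"
  assumes R: "(R has_derivative L) (at \<theta>)" and P: "is_proj_Q P" and \<theta>: "\<theta> \<in> unitmod"
    and \<eta>: "0 < \<eta>" "\<eta> < 1" and "c > 0" and "\<beta> > 0"
  shows "\<exists>m::nat. R (P (\<theta> + complex_of_real (c * \<eta> ^ m) *s (Xi (cgrad R \<theta>) *v cgrad R \<theta>)))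
    \<ge> R \<theta> + \<beta> * (norm (P (\<theta> + complex_of_real (c * \<eta> ^ m) *s (Xi (cgrad R \<theta>) *v cgrad R \<theta>)) - \<theta>))\<^sup>2"
proof -
  define g where "g = cgrad R \<theta>"
  define d where "d \<alpha> = P (\<theta> + complex_of_real \<alpha> *s (\<chi> n. sgn (g $ n))) - \<theta>" for \<alpha>
  obtain \<kappa> K where "\<kappa> > 0" "K \<ge> 0"
    and ascent: "\<And>\<alpha>. 0 < \<alpha> \<Longrightarrow> \<alpha> \<le> 1/2 \<Longrightarrow> \<kappa> * norm (d \<alpha>) \<le> L (d \<alpha>)"
    and bound: "\<And>\<alpha>. 0 < \<alpha> \<Longrightarrow> \<alpha> \<le> 1/2 \<Longrightarrow> norm (d \<alpha>) \<le> \<alpha> * K"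
    using projected_step_sufficient_ascent[OF P \<theta>, of g]
    unfolding has_derivative_cgrad[OF R] g_def[symmetric] d_def by blast
  obtain e where "e > 0"
    and increase: "\<And>d. norm d < e \<Longrightarrow> \<kappa> * norm d \<le> L d \<Longrightarrow> R \<theta> + \<beta> * (norm d)\<^sup>2 \<le> R (\<theta> + d)"
    using has_derivative_sufficient_increase[OF R \<open>\<kappa> > 0\<close> \<open>\<beta> > 0\<close>] by blast
  define \<alpha>max where "\<alpha>max = min (1/2) (e / (K + 1))"
  have "\<alpha>max > 0"
    using \<open>e > 0\<close> \<open>K \<ge> 0\<close> by (simp add: \<alpha>max_def)
  then obtain m where "\<eta> ^ m < \<alpha>max / c"
    using real_arch_pow_inv[of "\<alpha>max / c" \<eta>] \<eta> \<open>c > 0\<close> by auto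
  define \<alpha> where "\<alpha> = c * \<eta> ^ m"
  have \<alpha>: "0 < \<alpha>" "\<alpha> \<le> 1/2" "\<alpha> * (K + 1) < e"
    using \<open>\<eta> ^ m < \<alpha>max / c\<close> \<open>c > 0\<close> \<eta> \<open>K \<ge> 0\<close>
    by (auto simp: \<alpha>_def \<alpha>max_def field_simps)
  have "\<alpha> * K \<le> \<alpha> * (K + 1)"
    using \<alpha>(1) by simp
  then have "norm (d \<alpha>) < e"
    using bound[OF \<alpha>(1,2)] \<alpha>(3) by linarith
  then have "R \<theta> + \<beta> * (norm (d \<alpha>))\<^sup>2 \<le> R (\<theta> + d \<alpha>)"
    using increase ascent[OF \<alpha>(1,2)] by blast
  then show ?thesis
    by (intro exI[of _ m]) (simp add: d_def \<alpha>_def g_def Xi_mult_self)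
qed

theorem lemma1:
  fixes \<omega> :: "'k::finite \<Rightarrow> real" and \<sigma>0 :: real
    and D :: "'k \<Rightarrow> complex^'t^'r" and U :: "'k \<Rightarrow> complex^'s^'r"
    and G :: "complex^'t^'s" and W :: "'k \<Rightarrow> complex^'d^'t"
    and P :: "complex^'s \<Rightarrow> complex^'s" and \<theta>l :: "complex^'s" and \<eta> :: real
  assumes "\<sigma>0 > 0"
    and "is_proj_Q P"
    and "\<theta>l \<in> unitmod"
    and "0 < \<eta>" and "\<eta> < 1"
  shows "\<exists>\<beta>0>0. \<forall>\<beta>. 0 < \<beta> \<and> \<beta> \<le> \<beta>0 \<longrightarrow> (\<forall>c>0. \<exists>m::nat.
      (let R = WSR \<omega> \<sigma>0 D U G W;
           g = cgrad R \<theta>l;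
           \<theta>\<alpha> = P (\<theta>l + complex_of_real (c * \<eta> ^ m) *s (Xi g *v g))
       in R \<theta>\<alpha> \<ge> R \<theta>l + \<beta> / (2 * real CARD('s)) * (norm (\<theta>\<alpha> - \<theta>l))^2))"
proof -
  obtain L where L: "(WSR \<omega> \<sigma>0 D U G W has_derivative L) (at \<theta>l)"
    using differentiable_WSR[of \<sigma>0] \<open>\<sigma>0 > 0\<close> unfolding differentiable_def by blast
  show ?thesis
    unfolding Let_def
    by (intro exI[of _ 1] conjI allI impI scaled_projected_gradient_backtracking_terminates[OF L assms(2-5)])
      simp_all
qed

end
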